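(* Let $(S,K,I)$ be a split graph and let $P=v_1v_2\ldots v_n$, with $n\geq 2$, be an induced path in the factor graph $\Phi(S)$. If $d_1=\max\{d_i: i\in[n]\}$, then for each $i\in[n]$ we have $d_i\geq d_j$ and $N_i\supseteq N_j$ for all $j$ with $i+2\leq j\leq n$.
   Context: A split graph $(S,K,I)$ is a graph $S$ together with a fixed partition $V(S)=K\dot\cup I$, where $K$ is a clique and $I$ is an independent set. For a vertex $v_i$ (or $i$) of $S$, $N_i$ denotes its open neighborhood in $S$ and $d_i=|N_i|$ its degree in $S$; for $u,v$ write $\eta_{uv}=|N_u\cap N_v|$. The factor graph $\Phi(S)$ is the loopless multigraph with vertex set $I$ in which, for distinct $u,v\in I$, there is one edge joining $u$ and $v$ for each 2-switch of $S$ acting on $u$ and $v$ (a 2-switch replaces edges $ab,cd$ with $ac,bd$ when $ab,cd\in E(S)$ and $ac,bd\notin E(S)$); equivalently, the multiplicity of the edge $uv$ is $\sigma_{uv}=(d_u-\eta_{uv})(d_v-\eta_{uv})$, and $u,v$ are adjacent in $\Phi(S)$ iff $\sigma_{uv}>0$. An induced path $v_1\ldots v_n$ in $\Phi(S)$ consists of distinct vertices with $v_iv_{i+1}$ adjacent for all $i$ and no other pair $v_iv_j$ adjacent (multiplicities are ignored for adjacency). *)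

theory Defs
  imports Main
begin

definition simple_graph :: "'a set \<Rightarrow> ('a \<Rightarrow> 'a \<Rightarrow> bool) \<Rightarrow> bool" where
  "simple_graph V E \<longleftrightarrow> finite V \<and>
     (\<forall>u v. E u v \<longrightarrow> u \<in> V \<and> v \<in> V) \<and>
     (\<forall>u v. E u v \<longrightarrow> E v u) \<and> (\<forall>v. \<not> E v v)"

definition split_graph :: "'a set \<Rightarrow> ('a \<Rightarrow> 'a \<Rightarrow> bool) \<Rightarrow> 'a set \<Rightarrow> 'a set \<Rightarrow> bool" where
  "split_graph V E K I \<longleftrightarrow> simple_graph V E \<and> K \<union> I = V \<and> K \<inter> I = {} \<and>
     (\<forall>u\<in>K. \<forall>v\<in>K. u \<noteq> v \<longrightarrow> E u v) \<and>
     (\<forall>u\<in>I. \<forall>v\<in>I. \<not> E u v)"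

definition nbhd :: "'a set \<Rightarrow> ('a \<Rightarrow> 'a \<Rightarrow> bool) \<Rightarrow> 'a \<Rightarrow> 'a set" where
  "nbhd V E v = {u \<in> V. E v u}"

definition deg :: "'a set \<Rightarrow> ('a \<Rightarrow> 'a \<Rightarrow> bool) \<Rightarrow> 'a \<Rightarrow> nat" where
  "deg V E v = card (nbhd V E v)"

definition eta :: "'a set \<Rightarrow> ('a \<Rightarrow> 'a \<Rightarrow> bool) \<Rightarrow> 'a \<Rightarrow> 'a \<Rightarrow> nat" where
  "eta V E u v = card (nbhd V E u \<inter> nbhd V E v)"

text \<open>Multiplicity of the edge uv in the factor graph.\<close>
definition sigma :: "'a set \<Rightarrow> ('a \<Rightarrow> 'a \<Rightarrow> bool) \<Rightarrow> 'a \<Rightarrow> 'a \<Rightarrow> nat" where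
  "sigma V E u v = (deg V E u - eta V E u v) * (deg V E v - eta V E u v)"

definition factor_adj :: "'a set \<Rightarrow> ('a \<Rightarrow> 'a \<Rightarrow> bool) \<Rightarrow> 'a set \<Rightarrow> 'a \<Rightarrow> 'a \<Rightarrow> bool" where
  "factor_adj V E I u v \<longleftrightarrow> u \<in> I \<and> v \<in> I \<and> u \<noteq> v \<and> sigma V E u v > 0"

text \<open>Induced path v_0 ... v_{n-1} (0-indexed list) in the factor graph.\<close>
definition factor_induced_path :: "'a set \<Rightarrow> ('a \<Rightarrow> 'a \<Rightarrow> bool) \<Rightarrow> 'a set \<Rightarrow> 'a list \<Rightarrow> bool" where
  "factor_induced_path V E I P \<longleftrightarrow> distinct P \<and> set P \<subseteq> I \<and>
     (\<forall>i j. i < length P \<longrightarrow> j < length P \<longrightarrow>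
        (factor_adj V E I (P ! i) (P ! j) \<longleftrightarrow> (i + 1 = j \<or> j + 1 = i)))"

end

theory Submission
  imports Defs
begin

text \<open>Two vertices of \<open>I\<close> are adjacent in \<open>\<Phi>(S)\<close> exactly when their neighbourhoods are
  incomparable, since \<open>d\<^sub>u - \<eta>\<^sub>u\<^sub>v = |N\<^sub>u - N\<^sub>v|\<close>. Along the induced path, neighbourhoods at
  distance at least two are therefore comparable, while \<open>N\<^sub>k\<^sub>+\<^sub>1 \<subseteq> N\<^sub>k\<close> always fails.
  Induction on \<open>i\<close> now gives \<open>N\<^sub>j \<subseteq> N\<^sub>i\<close> for \<open>i + 2 \<le> j\<close>: for \<open>i = 1\<close> the maximality of
  \<open>d\<^sub>1\<close> rules out \<open>N\<^sub>1 \<subset> N\<^sub>j\<close>; and if \<open>N\<^sub>j \<subseteq> N\<^sub>i\<close> then \<open>N\<^sub>i\<^sub>+\<^sub>1 \<subseteq> N\<^sub>j\<close> is impossible,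
  so comparability forces \<open>N\<^sub>j \<subseteq> N\<^sub>i\<^sub>+\<^sub>1\<close>. The split structure is used only for finiteness.\<close>

lemma card_diff_card_Int_pos_iff:
  assumes "finite A"
  shows "0 < card A - card (A \<inter> B) \<longleftrightarrow> \<not> A \<subseteq> B"
proof -
  have "card (A \<inter> B) < card A \<longleftrightarrow> A \<inter> B \<subset> A"
    using assms by (auto intro: psubset_card_mono)
  then show ?thesis by auto
qed

lemma sigma_pos_iff_incomparable:
  assumes "finite V"
  shows "0 < sigma V E u v \<longleftrightarrow> \<not> nbhd V E u \<subseteq> nbhd V E v \<and> \<not> nbhd V E v \<subseteq> nbhd V E u"
proof -
  have "finite (nbhd V E u)" "finite (nbhd V E v)"
    using assms unfolding nbhd_def by auto
  then show ?thesis
    unfolding sigma_def deg_def eta_def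
    using card_diff_card_Int_pos_iff[of "nbhd V E u" "nbhd V E v"]
      card_diff_card_Int_pos_iff[of "nbhd V E v" "nbhd V E u"]
    by (simp add: Int_commute)
qed

lemma factor_induced_path_distant_nbhds_comparable:
  assumes "finite V" "factor_induced_path V E I P"
    and "j < length P" "i + 2 \<le> j"
  shows "nbhd V E (P ! i) \<subseteq> nbhd V E (P ! j) \<or> nbhd V E (P ! j) \<subseteq> nbhd V E (P ! i)"
proof -
  have "distinct P" "set P \<subseteq> I" and not_adj: "\<not> factor_adj V E I (P ! i) (P ! j)"
    using assms(2-4) unfolding factor_induced_path_def by auto
  moreover have "P ! i \<in> I" "P ! j \<in> I"
    using \<open>set P \<subseteq> I\<close> assms(3,4) by auto
  moreover have "P ! i \<noteq> P ! j"
    using \<open>distinct P\<close> assms(3,4) by (simp add: nth_eq_iff_index_eq)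
  ultimately have "\<not> 0 < sigma V E (P ! i) (P ! j)"
    using assms(3,4) unfolding factor_adj_def by auto
  then show ?thesis
    using sigma_pos_iff_incomparable[OF assms(1), of E "P ! i" "P ! j"] by simp
qed

lemma factor_induced_path_consecutive_nbhds_incomparable:
  assumes "finite V" "factor_induced_path V E I P" "Suc k < length P"
  shows "\<not> nbhd V E (P ! Suc k) \<subseteq> nbhd V E (P ! k)"
proof -
  have "factor_adj V E I (P ! k) (P ! Suc k)"
    using assms(2,3) unfolding factor_induced_path_def by auto
  then show ?thesis
    unfolding factor_adj_def
    using sigma_pos_iff_incomparable[OF assms(1), of E "P ! k" "P ! Suc k"] by simp
qed

lemma nested_from_comparable_chain:
  fixes N :: "nat \<Rightarrow> 'a set"
  assumes fin: "\<And>j. j < n \<Longrightarrow> finite (N j)"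
    and comparable: "\<And>i j. j < n \<Longrightarrow> i + 2 \<le> j \<Longrightarrow> N i \<subseteq> N j \<or> N j \<subseteq> N i"
    and consecutive: "\<And>k. Suc k < n \<Longrightarrow> \<not> N (Suc k) \<subseteq> N k"
    and card_max: "\<And>j. j < n \<Longrightarrow> card (N j) \<le> card (N 0)"
  shows "j < n \<Longrightarrow> i + 2 \<le> j \<Longrightarrow> N j \<subseteq> N i"
proof (induction i arbitrary: j)
  case 0
  from comparable[OF 0] show ?case
  proof
    assume "N 0 \<subseteq> N j"
    from card_seteq[OF fin[OF \<open>j < n\<close>] this card_max[OF \<open>j < n\<close>]]
    show ?case by simp
  qed
next
  case (Suc k)
  then have "N j \<subseteq> N k" by simp
  with consecutive[of k] Suc.prems have "\<not> N (Suc k) \<subseteq> N j" by auto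
  with comparable[OF Suc.prems] show ?case by blast
qed

theorem lemma2p2:
  fixes V K I :: "'a set" and E :: "'a \<Rightarrow> 'a \<Rightarrow> bool" and P :: "'a list"
  assumes "split_graph V E K I"
    and "factor_induced_path V E I P"
    and "length P \<ge> 2"
    and "\<forall>i < length P. deg V E (P ! i) \<le> deg V E (P ! 0)"
  shows "\<forall>i j. i < length P \<longrightarrow> j < length P \<longrightarrow> i + 2 \<le> j \<longrightarrow>
           deg V E (P ! j) \<le> deg V E (P ! i) \<and> nbhd V E (P ! j) \<subseteq> nbhd V E (P ! i)"
proof (intro allI impI conjI)
  fix i j assume "i < length P" "j < length P" "i + 2 \<le> j"
  have "finite V"
    using assms(1) unfolding split_graph_def simple_graph_def by blast
  then have fin: "finite (nbhd V E v)" for v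
    unfolding nbhd_def by simp
  show "nbhd V E (P ! j) \<subseteq> nbhd V E (P ! i)"
  proof (rule nested_from_comparable_chain[where N = "\<lambda>k. nbhd V E (P ! k)"])
    show "\<And>k k'. k' < length P \<Longrightarrow> k + 2 \<le> k' \<Longrightarrow>
        nbhd V E (P ! k) \<subseteq> nbhd V E (P ! k') \<or> nbhd V E (P ! k') \<subseteq> nbhd V E (P ! k)"
      by (rule factor_induced_path_distant_nbhds_comparable[OF \<open>finite V\<close> assms(2)])
    show "\<And>k. Suc k < length P \<Longrightarrow> \<not> nbhd V E (P ! Suc k) \<subseteq> nbhd V E (P ! k)"
      by (rule factor_induced_path_consecutive_nbhds_incomparable[OF \<open>finite V\<close> assms(2)])
    show "\<And>k. k < length P \<Longrightarrow> card (nbhd V E (P ! k)) \<le> card (nbhd V E (P ! 0))"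
      using assms(4) unfolding deg_def by blast
  qed (use fin \<open>j < length P\<close> \<open>i + 2 \<le> j\<close> in auto)
  then show "deg V E (P ! j) \<le> deg V E (P ! i)"
    unfolding deg_def using fin by (rule card_mono[rotated])
qed

end
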